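(* Let $p\ge2$, $m\in\mathbb{N}$, $a,b>0$, $\beta\in\mathbb{R}^p$, and consider the multiple regression function $f(x)=(1,x^T)^T$ for $x\in\mathbb{R}^{p-1}$. Let $x_1,\ldots,x_p\in\mathbb{R}^{p-1}$ be such that $f(x_1),\ldots,f(x_p)$ are linearly independent, let $c\in\mathbb{R}$ with $f(x_j)^T\beta=c$ for $j=1,\ldots,p-1$, and assume $f(x_p)^T\beta>c$. Among all designs $\xi$ supported on $\{x_1,\ldots,x_p\}$ with weights $w_1,\ldots,w_p$, the weights maximizing $\det(M(\xi;\beta))$ are $$w_p^*=\frac{2}{p+\sqrt{(p-2)^2+4(p-1)\dfrac{1+\frac{m}{b}\exp(f(x_p)^T\beta)}{1+\frac{m}{b}\exp(c)}}},\qquad w_1^*=\cdots=w_{p-1}^*=\frac{1-w_p^*}{p-1},$$ and these weights satisfy $0<w_p^*<\frac1p<w_1^*=\cdots=w_{p-1}^*<\frac{1}{p-1}$.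
   Context: A design $\xi$ is a probability measure with finite support $x_1,\ldots,x_l$ and weights $w_1,\ldots,w_l\ge0$, $\sum_j w_j=1$. The Poisson information matrix is $M_{Po}(\xi;\beta)=\sum_{j=1}^l w_j\exp(f(x_j)^T\beta)f(x_j)f(x_j)^T$, and the Poisson–Gamma information matrix is $M(\xi;\beta)=\frac{a}{b}\Bigl(M_{Po}(\xi;\beta)-\frac{M_{Po}(\xi;\beta)e_1e_1^TM_{Po}(\xi;\beta)}{e_1^TM_{Po}(\xi;\beta)e_1+b/m}\Bigr)$, where $e_1$ is the first standard unit vector of $\mathbb{R}^p$. *)

theory Defs
  imports "Jordan_Normal_Form.VS_Connect" "Jordan_Normal_Form.Determinant"
begin

definition regf :: "real vec \<Rightarrow> real vec" where
  "regf x = vCons 1 x"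

definition lin_indpt_family :: "nat \<Rightarrow> (nat \<Rightarrow> real vec) \<Rightarrow> nat set \<Rightarrow> bool" where
  "lin_indpt_family n v J \<longleftrightarrow> (\<forall>j\<in>J. v j \<in> carrier_vec n) \<and> inj_on v J \<and>
     \<not> module.lin_dep class_ring (module_vec TYPE(real) n) (v ` J)"

text \<open>Design supported on the points x j, j in J, with weights w j.\<close>
definition is_design_weights :: "nat set \<Rightarrow> (nat \<Rightarrow> real) \<Rightarrow> bool" where
  "is_design_weights J w \<longleftrightarrow> (\<forall>j\<in>J. w j \<ge> 0) \<and> (\<Sum>j\<in>J. w j) = 1"

definition M_Po :: "nat \<Rightarrow> nat set \<Rightarrow> (nat \<Rightarrow> real vec) \<Rightarrow> (nat \<Rightarrow> real) \<Rightarrow> real vec \<Rightarrow> real mat" where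
  "M_Po p J x w \<beta> = mat p p (\<lambda>(i,k). \<Sum>j\<in>J. w j * exp (regf (x j) \<bullet> \<beta>) * (regf (x j) $ i) * (regf (x j) $ k))"

definition e1e1T :: "nat \<Rightarrow> real mat" where
  "e1e1T p = mat p p (\<lambda>(i,k). if i = 0 \<and> k = 0 then 1 else 0)"

definition M_PG :: "real \<Rightarrow> real \<Rightarrow> nat \<Rightarrow> nat \<Rightarrow> nat set \<Rightarrow> (nat \<Rightarrow> real vec) \<Rightarrow> (nat \<Rightarrow> real) \<Rightarrow> real vec \<Rightarrow> real mat" where
  "M_PG a b m p J x w \<beta> =
     (let Mp = M_Po p J x w \<beta>; e1 = unit_vec p 0 in
      (a / b) \<cdot>\<^sub>m (Mp - (1 / (e1 \<bullet> (Mp *\<^sub>v e1) + b / real m)) \<cdot>\<^sub>m (Mp * e1e1T p * Mp)))"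

end

theory Submission
  imports Defs "Jordan_Normal_Form.DL_Rank"
begin

text \<open>
  Let Y be the matrix with columns f(x_1), ..., f(x_p) and \<omega>_j = w_j exp(f(x_j)^T \<beta>). Since the
  first row of Y consists of ones, M_Po = Y diag(\<omega>) Y^T and
  M = (a/b) Y (diag(\<omega>) - \<omega> \<omega>^T / (\<Sigma> \<omega> + b/m)) Y^T, so by the matrix determinant lemma
  det M = (a/b)^p det(Y)^2 (\<Pi>_j \<omega>_j) (b/m) / (\<Sigma>_j \<omega>_j + b/m). Under the hypothesis on \<beta> this is
  a positive constant times \<Pi>_j w_j / (d (1 - w_p) + D w_p) with d = exp c + b/m < D = exp(f(x_p)^T \<beta>) + b/m.

  That objective is log-concave. Bound log w_j (j < p) by its tangent at (1 - t)/(p - 1) and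
  log(w_p / (d (1 - w_p) + D w_p)) by its tangent at t: the linear terms cancel on the simplex exactly
  when d (1 - t) = (p - 1) t (d (1 - t) + D t), a quadratic whose positive root is w_p^*. Strictness of
  y < exp(y - 1) for y \<noteq> 1 gives uniqueness.
\<close>

lemma le_exp_minus_one: "y \<le> exp (y - 1)" for y :: real
  using exp_ge_add_one_self[of "y - 1"] by simp

lemma less_exp_minus_one:
  fixes y :: real
  assumes "y \<noteq> 1"
  shows "y < exp (y - 1)"
proof (cases "y > 0")
  case True
  have "ln y < y - 1"
    using ln_le_minus_one[OF True] ln_eq_minus_one[OF True] assms by fastforce
  then show ?thesis
    using True by (metis exp_less_cancel_iff exp_ln)
next
  case False
  then show ?thesis
    using exp_gt_zero[of "y - 1"] by linarith
qed

lemma prod_le_pow_exp_sum: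
  fixes w :: "'a \<Rightarrow> real"
  assumes J: "finite J" and w: "\<forall>j\<in>J. 0 \<le> w j" and q: "q > 0"
  shows "(\<Prod>j\<in>J. w j) \<le> q ^ card J * exp (\<Sum>j\<in>J. w j / q - 1)"
    and "\<exists>k\<in>J. w k \<noteq> q \<Longrightarrow> (\<Prod>j\<in>J. w j) < q ^ card J * exp (\<Sum>j\<in>J. w j / q - 1)"
proof -
  have tangent: "w j \<le> q * exp (w j / q - 1)" for j
    using le_exp_minus_one[of "w j / q"] q by (simp add: divide_le_eq mult.commute)
  have rhs: "(\<Prod>j\<in>J. q * exp (w j / q - 1)) = q ^ card J * exp (\<Sum>j\<in>J. w j / q - 1)"
    using J by (simp add: prod.distrib exp_sum)
  show "(\<Prod>j\<in>J. w j) \<le> q ^ card J * exp (\<Sum>j\<in>J. w j / q - 1)"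
    unfolding rhs[symmetric] using w tangent by (intro prod_mono) auto
  assume "\<exists>k\<in>J. w k \<noteq> q"
  then obtain k where k: "k \<in> J" "w k \<noteq> q" by blast
  have "w k / q < exp (w k / q - 1)"
    using k q by (intro less_exp_minus_one) simp
  then have "w k < q * exp (w k / q - 1)"
    using q by (simp add: divide_less_eq mult.commute)
  then show "(\<Prod>j\<in>J. w j) < q ^ card J * exp (\<Sum>j\<in>J. w j / q - 1)"
    unfolding rhs[symmetric] using k J w tangent q by (intro prod_mono_strict[of k]) auto
qed

lemma affine_combination_pos:
  fixes d D s :: real
  assumes "0 < d" "d \<le> D" "0 \<le> s"
  shows "0 < d * (1 - s) + D * s"
proof -
  have "0 \<le> (D - d) * s"
    using assms by simp
  then show ?thesis
    using assms(1) by (simp add: algebra_simps)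
qed

lemma ratio_le_tangent_exp:
  fixes d D s t :: real
  assumes d: "0 < d" "d \<le> D" and s: "0 \<le> s" and t: "0 < t"
  shows "s * (d * (1 - t) + D * t) \<le> t * (d * (1 - s) + D * s) * exp (d * (s - t) / (t * (d * (1 - t) + D * t)))"
proof -
  define L where "L = (\<lambda>u. d * (1 - u) + D * u)"
  have Ls: "0 < L s" and Lt: "0 < L t"
    unfolding L_def using d s t by (simp_all add: affine_combination_pos)
  define y where "y = s * L t / (t * L s)"
  have "s * L t - t * L s = d * (s - t)"
    unfolding L_def by (simp add: algebra_simps)
  then have "y - 1 = d * (s - t) / (t * L s)"
    using t Ls unfolding y_def by (simp add: field_simps)
  also have "\<dots> \<le> d * (s - t) / (t * L t)"
  proof -
    have "d * (s - t) / (t * L t) - d * (s - t) / (t * L s) = d * (s - t) * (L s - L t) / (t * L s * L t)"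
      using t Ls Lt by (simp add: field_simps)
    also have "L s - L t = (D - d) * (s - t)"
      unfolding L_def by (simp add: algebra_simps)
    finally have "d * (s - t) / (t * L t) - d * (s - t) / (t * L s) = d * (D - d) * (s - t)^2 / (t * L s * L t)"
      by (simp add: power2_eq_square mult_ac)
    moreover have "0 \<le> d * (D - d) * (s - t)^2 / (t * L s * L t)"
      using d t Ls Lt by (intro divide_nonneg_pos mult_nonneg_nonneg) auto
    ultimately show ?thesis by linarith
  qed
  finally have "y \<le> exp (d * (s - t) / (t * L t))"
    using le_exp_minus_one[of y] by (meson exp_le_cancel_iff order_trans)
  then show ?thesis
    using t Ls unfolding y_def L_def by (simp add: divide_le_eq mult_ac)
qed

definition optimal_weight :: "nat \<Rightarrow> real \<Rightarrow> real" where
  "optimal_weight p r = 2 / (real p + sqrt ((real p - 2)^2 + 4 * (real p - 1) * r))"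

lemma optimal_weight_root:
  assumes p: "p \<ge> 2" and r: "r > 1"
  defines "t \<equiv> optimal_weight p r"
  shows "0 < t" and "t < 1 / real p" and "(real p - 1) * (r - 1) * t^2 + real p * t - 1 = 0"
proof -
  define s where "s = sqrt ((real p - 2)^2 + 4 * (real p - 1) * r)"
  have radicand: "(real p)^2 < (real p - 2)^2 + 4 * (real p - 1) * r"
  proof -
    have "4 * (real p - 1) < 4 * (real p - 1) * r"
      using p r by simp
    then show ?thesis
      by (simp add: power2_eq_square algebra_simps)
  qed
  have s2: "s^2 = (real p - 2)^2 + 4 * (real p - 1) * r"
    unfolding s_def using radicand by (intro real_sqrt_pow2) (smt (verit) zero_le_power2)
  have sp: "real p < s"
    unfolding s_def using radicand by (metis of_nat_0_le_iff real_less_rsqrt)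
  have ps: "0 < real p + s"
    using sp by linarith
  have t_s: "t = 2 / (real p + s)"
    unfolding t_def s_def optimal_weight_def ..
  show "0 < t" and "t < 1 / real p"
    unfolding t_s using sp p by (simp_all add: field_simps)
  define u where "u = real p + s"
  have tu: "t * u = 2"
    unfolding t_s u_def using ps by (simp add: field_simps)
  have "((real p - 1) * (r - 1) * t^2 + real p * t - 1) * u^2
      = (real p - 1) * (r - 1) * (t * u)^2 + real p * (t * u) * u - u^2"
    by (simp add: algebra_simps power2_eq_square)
  also have "\<dots> = 4 * (real p - 1) * (r - 1) + 2 * real p * u - u^2"
    unfolding tu by simp
  also have "\<dots> = 0"
    using s2 unfolding u_def by (simp add: power2_eq_square algebra_simps)
  finally show "(real p - 1) * (r - 1) * t^2 + real p * t - 1 = 0"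
    using ps unfolding u_def by simp
qed

lemma optimal_weight_less_one:
  assumes "p \<ge> 2" and "r > 1"
  shows "0 < optimal_weight p r" and "optimal_weight p r < 1"
proof -
  have "1 / real p < 1"
    using assms by simp
  then show "0 < optimal_weight p r" and "optimal_weight p r < 1"
    using optimal_weight_root[OF assms] by linarith+
qed

lemma optimal_weight_stationary:
  assumes p: "p \<ge> 2" and d: "0 < d" "d < D"
  defines "t \<equiv> optimal_weight p (D / d)"
  shows "d * (1 - t) = (real p - 1) * t * (d * (1 - t) + D * t)"
proof -
  have "(real p - 1) * (D / d - 1) * t^2 + real p * t - 1 = 0"
    unfolding t_def using p d by (intro optimal_weight_root) auto
  then have "d * ((real p - 1) * (D / d - 1) * t^2 + real p * t - 1) = 0"
    by simp
  moreover have "d * ((real p - 1) * (D / d - 1) * t^2 + real p * t - 1)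
      = (real p - 1) * t * (d * (1 - t) + D * t) - d * (1 - t)"
    using d by (simp add: field_simps power2_eq_square)
  ultimately show ?thesis
    by simp
qed

lemma atLeastAtMost_insert_last: "1 \<le> p \<Longrightarrow> {1..p} = insert p {1..p - 1}"
  for p :: nat
  by auto

lemma sum_atLeastAtMost_last:
  fixes p :: nat
  assumes "1 \<le> p"
  shows "(\<Sum>j\<in>{1..p}. f j) = f p + (\<Sum>j\<in>{1..p - 1}. f j)"
  unfolding atLeastAtMost_insert_last[OF assms] using assms by simp

lemma prod_atLeastAtMost_last:
  fixes p :: nat
  assumes "1 \<le> p"
  shows "(\<Prod>j\<in>{1..p}. f j) = f p * (\<Prod>j\<in>{1..p - 1}. f j)"
  unfolding atLeastAtMost_insert_last[OF assms] using assms by simp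

lemma design_weights_last:
  assumes p: "1 \<le> p" and w: "is_design_weights {1..p} w"
  shows "(\<Sum>j\<in>{1..p - 1}. w j) = 1 - w p" and "0 \<le> w p" and "w p \<le> 1"
proof -
  have sum: "w p + (\<Sum>j\<in>{1..p - 1}. w j) = 1"
    using w sum_atLeastAtMost_last[OF p, of w] unfolding is_design_weights_def by simp
  then show "(\<Sum>j\<in>{1..p - 1}. w j) = 1 - w p"
    by simp
  show "0 \<le> w p"
    using w p unfolding is_design_weights_def by simp
  have "0 \<le> (\<Sum>j\<in>{1..p - 1}. w j)"
    using w unfolding is_design_weights_def by (intro sum_nonneg) auto
  then show "w p \<le> 1"
    using sum by linarith
qed

definition optimal_design :: "nat \<Rightarrow> real \<Rightarrow> nat \<Rightarrow> real" where
  "optimal_design p t = (\<lambda>j. if j = p then t else (1 - t) / (real p - 1))"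

lemma optimal_design_below_last:
  "j \<in> {1..p - 1} \<Longrightarrow> optimal_design p t j = (1 - t) / (real p - 1)"
  by (auto simp: optimal_design_def)

lemma optimal_design_is_design:
  assumes p: "p \<ge> 2" and t: "0 \<le> t" "t \<le> 1"
  shows "is_design_weights {1..p} (optimal_design p t)"
proof -
  have "(\<Sum>j\<in>{1..p - 1}. optimal_design p t j) = (\<Sum>j\<in>{1..p - 1}. (1 - t) / (real p - 1))"
    by (intro sum.cong) (simp_all add: optimal_design_below_last)
  also have "\<dots> = 1 - t"
    using p by (simp add: of_nat_diff)
  finally have "(\<Sum>j\<in>{1..p}. optimal_design p t j) = 1"
    using p sum_atLeastAtMost_last[of p "optimal_design p t"] by (simp add: optimal_design_def)
  moreover have "\<forall>j\<in>{1..p}. 0 \<le> optimal_design p t j"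
    using p t by (auto simp: optimal_design_def)
  ultimately show ?thesis
    unfolding is_design_weights_def by simp
qed

lemma optimal_design_bounds:
  assumes p: "p \<ge> 2" and t: "0 < t" "t < 1 / real p" and j: "j \<in> {1..p - 1}"
  shows "1 / real p < optimal_design p t j" and "optimal_design p t j < 1 / (real p - 1)"
proof -
  have "real p - 1 < real p * (1 - t)"
    using t p by (simp add: field_simps)
  then show "1 / real p < optimal_design p t j"
    using p j by (simp add: optimal_design_below_last field_simps)
  show "optimal_design p t j < 1 / (real p - 1)"
    using p t j by (simp add: optimal_design_below_last field_simps)
qed

lemma prod_optimal_design:
  assumes "1 \<le> p"
  shows "(\<Prod>j\<in>{1..p}. optimal_design p t j) = ((1 - t) / (real p - 1)) ^ (p - 1) * t"
proof -
  have "(\<Prod>j\<in>{1..p - 1}. optimal_design p t j) = (\<Prod>j\<in>{1..p - 1}. (1 - t) / (real p - 1))"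
    by (intro prod.cong) (simp_all add: optimal_design_below_last)
  then show ?thesis
    using prod_atLeastAtMost_last[OF assms, of "optimal_design p t"]
    by (simp add: optimal_design_def mult.commute)
qed

lemma tangent_exponents_cancel:
  assumes p: "p \<ge> 2" and d: "0 < d" "d < D" and w: "is_design_weights {1..p} w"
  defines "t \<equiv> optimal_weight p (D / d)"
  defines "q \<equiv> (1 - t) / (real p - 1)"
  shows "(\<Sum>j\<in>{1..p - 1}. w j / q - 1) + d * (w p - t) / (t * (d * (1 - t) + D * t)) = 0"
proof -
  have t: "0 < t" "t < 1"
    unfolding t_def using p d by (intro optimal_weight_less_one; simp)+
  have "(\<Sum>j\<in>{1..p - 1}. w j / q - 1) = (\<Sum>j\<in>{1..p - 1}. w j) / q - (real p - 1)"
    using p by (simp add: sum_subtractf sum_divide_distrib of_nat_diff)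
  also have "(\<Sum>j\<in>{1..p - 1}. w j) = 1 - w p"
    using p by (intro design_weights_last(1)[OF _ w]) simp
  also have "(1 - w p) / q - (real p - 1) = (real p - 1) * (t - w p) / (1 - t)"
    using p t unfolding q_def by (simp add: field_simps)
  finally have A1: "(\<Sum>j\<in>{1..p - 1}. w j / q - 1) = (real p - 1) * (t - w p) / (1 - t)" .
  define L where "L = d * (1 - t) + D * t"
  have L: "0 < L"
    unfolding L_def using d t by (simp add: affine_combination_pos)
  have "d * (w p - t) * (1 - t) = (w p - t) * (d * (1 - t))"
    by (simp add: algebra_simps)
  also have "\<dots> = (real p - 1) * (w p - t) * (t * L)"
    using optimal_weight_stationary[OF p d] unfolding t_def L_def by simp
  finally have A2: "d * (w p - t) / (t * L) = (real p - 1) * (w p - t) / (1 - t)"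
    using t L by (simp add: frac_eq_eq)
  show ?thesis
    unfolding A1 A2[unfolded L_def] by (simp add: add_divide_distrib[symmetric] algebra_simps)
qed

lemma design_objective_le:
  assumes p: "p \<ge> 2" and d: "0 < d" "d < D" and w: "is_design_weights {1..p} w"
  defines "t \<equiv> optimal_weight p (D / d)"
  defines "q \<equiv> (1 - t) / (real p - 1)"
  shows "(\<Prod>j\<in>{1..p}. w j) * (d * (1 - t) + D * t)
      \<le> (\<Prod>j\<in>{1..p}. optimal_design p t j) * (d * (1 - w p) + D * w p)"
    and "\<exists>k\<in>{1..p - 1}. w k \<noteq> q \<Longrightarrow> (\<Prod>j\<in>{1..p}. w j) * (d * (1 - t) + D * t)
      < (\<Prod>j\<in>{1..p}. optimal_design p t j) * (d * (1 - w p) + D * w p)"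
proof -
  have t: "0 < t" "t < 1"
    unfolding t_def using p d by (intro optimal_weight_less_one; simp)+
  have q: "0 < q"
    unfolding q_def using p t by simp
  have p1: "1 \<le> p"
    using p by simp
  have w_nonneg: "\<forall>j\<in>{1..p - 1}. 0 \<le> w j"
    using w unfolding is_design_weights_def by auto
  have wp: "0 \<le> w p" "w p \<le> 1"
    using p w by (intro design_weights_last; simp)+
  define A1 where "A1 = (\<Sum>j\<in>{1..p - 1}. w j / q - 1)"
  define A2 where "A2 = d * (w p - t) / (t * (d * (1 - t) + D * t))"
  define P where "P = (\<Prod>j\<in>{1..p - 1}. w j)"
  define S where "S = t * (d * (1 - w p) + D * w p) * exp A2"
  have P_le: "P \<le> q ^ (p - 1) * exp A1"
    and P_less: "\<exists>k\<in>{1..p - 1}. w k \<noteq> q \<Longrightarrow> P < q ^ (p - 1) * exp A1"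
    using prod_le_pow_exp_sum[OF _ w_nonneg q] unfolding P_def A1_def by simp_all
  have "w p * (d * (1 - t) + D * t) \<le> S"
    unfolding S_def A2_def using d wp t by (intro ratio_le_tangent_exp) auto
  then have PS: "P * (w p * (d * (1 - t) + D * t)) \<le> P * S"
    unfolding P_def using w_nonneg by (intro mult_left_mono prod_nonneg) auto
  have S_pos: "0 < S"
    unfolding S_def using d t wp by (simp add: affine_combination_pos)
  have "q ^ (p - 1) * exp A1 * S = q ^ (p - 1) * t * (d * (1 - w p) + D * w p) * exp (A1 + A2)"
    unfolding S_def exp_add by (simp add: mult_ac)
  also have "A1 + A2 = 0"
    unfolding A1_def A2_def q_def t_def by (rule tangent_exponents_cancel[OF p d w])
  finally have BS: "q ^ (p - 1) * exp A1 * S = (\<Prod>j\<in>{1..p}. optimal_design p t j) * (d * (1 - w p) + D * w p)"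
    using p unfolding prod_optimal_design[OF p1] q_def by simp
  have prod_w: "(\<Prod>j\<in>{1..p}. w j) * (d * (1 - t) + D * t) = P * (w p * (d * (1 - t) + D * t))"
    unfolding P_def prod_atLeastAtMost_last[OF p1] by (simp add: mult_ac)
  show "(\<Prod>j\<in>{1..p}. w j) * (d * (1 - t) + D * t)
      \<le> (\<Prod>j\<in>{1..p}. optimal_design p t j) * (d * (1 - w p) + D * w p)"
    unfolding prod_w BS[symmetric] using PS P_le S_pos by (meson mult_right_mono order_trans less_imp_le)
  assume "\<exists>k\<in>{1..p - 1}. w k \<noteq> q"
  then show "(\<Prod>j\<in>{1..p}. w j) * (d * (1 - t) + D * t)
      < (\<Prod>j\<in>{1..p}. optimal_design p t j) * (d * (1 - w p) + D * w p)"
    unfolding prod_w BS[symmetric] using PS P_less S_pos by (meson mult_strict_right_mono order_le_less_trans)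
qed

lemma optimal_design_maximizes:
  assumes p: "p \<ge> 2" and d: "0 < d" "d < D" and w: "is_design_weights {1..p} w"
  defines "t \<equiv> optimal_weight p (D / d)"
  shows "(\<Prod>j\<in>{1..p}. w j) / (d * (1 - w p) + D * w p)
      \<le> (\<Prod>j\<in>{1..p}. optimal_design p t j) / (d * (1 - t) + D * t)"
    and "(\<Prod>j\<in>{1..p}. w j) / (d * (1 - w p) + D * w p)
      = (\<Prod>j\<in>{1..p}. optimal_design p t j) / (d * (1 - t) + D * t)
      \<Longrightarrow> \<forall>j\<in>{1..p}. w j = optimal_design p t j"
proof -
  have t: "0 < t" "t < 1"
    unfolding t_def using p d by (intro optimal_weight_less_one; simp)+
  have wp: "0 \<le> w p" "w p \<le> 1"
    using p w by (intro design_weights_last; simp)+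
  have Lw: "0 < d * (1 - w p) + D * w p" and Lt: "0 < d * (1 - t) + D * t"
    using d wp t by (simp_all add: affine_combination_pos)
  have ratio_less: "(\<Prod>j\<in>{1..p}. w j) / (d * (1 - w p) + D * w p)
      < (\<Prod>j\<in>{1..p}. optimal_design p t j) / (d * (1 - t) + D * t)"
    if "\<exists>k\<in>{1..p - 1}. w k \<noteq> (1 - t) / (real p - 1)"
    using design_objective_le(2)[OF p d w, folded t_def, OF that] Lw Lt by (simp add: field_simps)
  show "(\<Prod>j\<in>{1..p}. w j) / (d * (1 - w p) + D * w p)
      \<le> (\<Prod>j\<in>{1..p}. optimal_design p t j) / (d * (1 - t) + D * t)"
    using design_objective_le(1)[OF p d w, folded t_def] Lw Lt by (simp add: field_simps)
  assume "(\<Prod>j\<in>{1..p}. w j) / (d * (1 - w p) + D * w p)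
      = (\<Prod>j\<in>{1..p}. optimal_design p t j) / (d * (1 - t) + D * t)"
  then have below_last: "\<forall>j\<in>{1..p - 1}. w j = optimal_design p t j"
    using ratio_less by (auto simp: optimal_design_below_last)
  have "1 - w p = (\<Sum>j\<in>{1..p - 1}. w j)"
    using p by (intro design_weights_last(1)[OF _ w, symmetric]) simp
  also have "\<dots> = (\<Sum>j\<in>{1..p - 1}. optimal_design p t j)"
    using below_last by (intro sum.cong) simp_all
  also have "\<dots> = 1 - optimal_design p t p"
    using p t by (intro design_weights_last(1) optimal_design_is_design) simp_all
  finally have "w p = optimal_design p t p"
    by simp
  then show "\<forall>j\<in>{1..p}. w j = optimal_design p t j"
    using below_last atLeastAtMost_insert_last[of p] p by auto
qed

lemma mat_mult_index:
  assumes "A \<in> carrier_mat nr n" "B \<in> carrier_mat n nc" "i < nr" "j < nc"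
  shows "(A * B) $$ (i, j) = (\<Sum>l<n. A $$ (i, l) * B $$ (l, j))"
  using assms by (simp add: scalar_prod_def lessThan_atLeast0)

lemma det_unit_lower_triangular:
  fixes A :: "'a :: comm_ring_1 mat"
  assumes A: "A \<in> carrier_mat n n"
    and lower: "\<And>i j. i < j \<Longrightarrow> j < n \<Longrightarrow> A $$ (i, j) = 0"
    and diag: "\<And>i. i < n \<Longrightarrow> A $$ (i, i) = 1"
  shows "det A = 1"
proof -
  have "det A = prod_list (diag_mat A)"
    by (rule det_lower_triangular[OF lower A])
  also have "\<dots> = 1"
    unfolding prod_list_diag_prod using A diag by simp
  finally show ?thesis .
qed

text \<open>E' is the inverse of E, so the left-hand side is similar to I + 1 u^T.\<close>

lemma ones_rank1_similar_triangular:
  fixes u :: "nat \<Rightarrow> 'a :: comm_ring_1"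
  assumes n: "0 < n"
  defines "E \<equiv> mat n n (\<lambda>(i, k). if k = 0 \<or> i = k then 1 else 0)"
    and "E' \<equiv> mat n n (\<lambda>(i, k). if i = k then 1 else if k = 0 then - 1 else 0)"
  shows "E' * (mat n n (\<lambda>(i, k). (if i = k then 1 else 0) + u k) * E)
    = mat n n (\<lambda>(i, k). (if i = k then 1 else 0) + (if i = 0 then (if k = 0 then (\<Sum>l<n. u l) else u k) else 0))"
    (is "E' * (?A * E) = ?T")
proof -
  have AE: "(?A * E) $$ (i, k) = (if k = 0 then 1 + (\<Sum>l<n. u l) else ?A $$ (i, k))"
    if "i < n" "k < n" for i k
  proof -
    have "(?A * E) $$ (i, k) = (\<Sum>l<n. ?A $$ (i, l) * E $$ (l, k))"
      using that by (intro mat_mult_index) (auto simp: E_def)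
    also have "\<dots> = (\<Sum>l<n. if k = 0 then ?A $$ (i, l) else if l = k then ?A $$ (i, k) else 0)"
      using that by (intro sum.cong) (auto simp: E_def)
    also have "\<dots> = (if k = 0 then 1 + (\<Sum>l<n. u l) else ?A $$ (i, k))"
      using that by (simp add: sum.distrib)
    finally show ?thesis .
  qed
  show ?thesis
  proof (rule eq_matI)
    fix i k assume "i < dim_row ?T" "k < dim_col ?T"
    then have i: "i < n" and k: "k < n" by auto
    have "(E' * (?A * E)) $$ (i, k) = (\<Sum>l<n. E' $$ (i, l) * (?A * E) $$ (l, k))"
      using i k by (intro mat_mult_index) (auto simp: E'_def E_def)
    also have "\<dots> = (\<Sum>l<n. (if l = i then (?A * E) $$ (i, k) else 0)
        - (if l = 0 \<and> i \<noteq> 0 then (?A * E) $$ (0, k) else 0))"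
      using i by (intro sum.cong) (auto simp: E'_def)
    also have "\<dots> = (?A * E) $$ (i, k) - (if i \<noteq> 0 then (?A * E) $$ (0, k) else 0)"
      using i n by (simp add: sum_subtractf)
    also have "\<dots> = ?T $$ (i, k)"
      using i k n by (auto simp: AE)
    finally show "(E' * (?A * E)) $$ (i, k) = ?T $$ (i, k)" .
  qed (auto simp: E'_def E_def)
qed

lemma det_one_plus_ones_times_row:
  fixes u :: "nat \<Rightarrow> 'a :: comm_ring_1"
  assumes n: "0 < n"
  shows "det (mat n n (\<lambda>(i, k). (if i = k then 1 else 0) + u k)) = 1 + (\<Sum>k<n. u k)"
proof -
  define A where "A = mat n n (\<lambda>(i, k). (if i = k then 1 else 0) + u k)"
  define E :: "'a mat" where "E = mat n n (\<lambda>(i, k). if k = 0 \<or> i = k then 1 else 0)"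
  define E' :: "'a mat" where "E' = mat n n (\<lambda>(i, k). if i = k then 1 else if k = 0 then - 1 else 0)"
  define T where "T = mat n n (\<lambda>(i, k). (if i = k then 1 else 0) + (if i = 0 then (if k = 0 then (\<Sum>l<n. u l) else u k) else 0))"
  have carrier: "A \<in> carrier_mat n n" "E \<in> carrier_mat n n" "E' \<in> carrier_mat n n" "T \<in> carrier_mat n n"
    by (simp_all add: A_def E_def E'_def T_def)
  have "det T = det E' * (det A * det E)"
    unfolding T_def ones_rank1_similar_triangular[OF n, of u, folded A_def E_def E'_def, symmetric]
    using carrier by (simp add: det_mult[of _ n])
  moreover have "det E = 1" and "det E' = 1"
    using carrier by (auto intro!: det_unit_lower_triangular simp: E_def E'_def)
  moreover have "det T = 1 + (\<Sum>k<n. u k)"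
  proof -
    have "det T = (\<Prod>i = 0..<n. T $$ (i, i))"
      using carrier by (simp add: det_upper_triangular[of _ n] upper_triangular_def T_def prod_list_diag_prod)
    also have "\<dots> = T $$ (0, 0) * (\<Prod>i = 1..<n. T $$ (i, i))"
      using n by (simp add: prod.atLeast_Suc_lessThan)
    also have "(\<Prod>i = 1..<n. T $$ (i, i)) = 1"
      by (intro prod.neutral) (auto simp: T_def)
    finally show ?thesis
      using n by (simp add: T_def)
  qed
  ultimately show ?thesis
    unfolding A_def by simp
qed

lemma det_mat_diag:
  fixes f :: "nat \<Rightarrow> 'a :: comm_ring_1"
  shows "det (mat_diag n f) = (\<Prod>i<n. f i)"
proof -
  have "det (mat_diag n f) = prod_list (diag_mat (mat_diag n f))"
    by (rule det_upper_triangular) (auto simp: upper_triangular_def mat_diag_def)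
  then show ?thesis
    by (simp add: prod_list_diag_prod mat_diag_def lessThan_atLeast0)
qed

lemma det_diag_minus_rank1:
  fixes \<omega> :: "nat \<Rightarrow> 'a :: comm_ring_1"
  assumes n: "0 < n"
  shows "det (mat n n (\<lambda>(i, k). (if i = k then \<omega> i else 0) - \<kappa> * \<omega> i * \<omega> k))
    = (\<Prod>l<n. \<omega> l) * (1 - \<kappa> * (\<Sum>l<n. \<omega> l))"
proof -
  define A where "A = mat n n (\<lambda>(i, k). (if i = k then 1 else 0) + - \<kappa> * \<omega> k)"
  have "mat n n (\<lambda>(i, k). (if i = k then \<omega> i else 0) - \<kappa> * \<omega> i * \<omega> k) = mat_diag n \<omega> * A"
    unfolding A_def by (subst mat_diag_mult_left[of _ n n]) (auto simp: algebra_simps)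
  moreover have "det A = 1 - \<kappa> * (\<Sum>l<n. \<omega> l)"
    unfolding A_def det_one_plus_ones_times_row[OF n] by (simp add: sum_distrib_left sum_negf)
  ultimately show ?thesis
    by (simp add: det_mult[of _ n] A_def det_mat_diag)
qed

definition design_matrix :: "nat \<Rightarrow> (nat \<Rightarrow> real vec) \<Rightarrow> real mat" where
  "design_matrix p x = mat p p (\<lambda>(i, k). regf (x (Suc k)) $ i)"

lemma design_matrix_first_row:
  "k < p \<Longrightarrow> design_matrix p x $$ (0, k) = 1"
  by (simp add: design_matrix_def regf_def)

lemma sandwich_diag_minus_rank1_index:
  fixes Y :: "'a :: comm_ring_1 mat"
  assumes Y: "Y \<in> carrier_mat n n" and i: "i < n" and k: "k < n"
  shows "(Y * mat n n (\<lambda>(l, j). (if l = j then \<omega> l else 0) - \<kappa> * \<omega> l * \<omega> j) * transpose_mat Y) $$ (i, k)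
    = (\<Sum>l<n. \<omega> l * Y $$ (i, l) * Y $$ (k, l))
      - \<kappa> * (\<Sum>l<n. \<omega> l * Y $$ (i, l)) * (\<Sum>l<n. \<omega> l * Y $$ (k, l))"
proof -
  define N where "N = mat n n (\<lambda>(l, j). (if l = j then \<omega> l else 0) - \<kappa> * \<omega> l * \<omega> j)"
  have YN: "(Y * N) $$ (i, l) = \<omega> l * Y $$ (i, l) - \<kappa> * \<omega> l * (\<Sum>j<n. \<omega> j * Y $$ (i, j))"
    if l: "l < n" for l
  proof -
    have "(Y * N) $$ (i, l) = (\<Sum>j<n. Y $$ (i, j) * N $$ (j, l))"
      using Y i l by (intro mat_mult_index) (auto simp: N_def)
    also have "\<dots> = (\<Sum>j<n. (if j = l then \<omega> l * Y $$ (i, l) else 0) - \<kappa> * \<omega> l * (\<omega> j * Y $$ (i, j)))"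
      using l by (intro sum.cong) (auto simp: N_def algebra_simps)
    also have "\<dots> = \<omega> l * Y $$ (i, l) - \<kappa> * \<omega> l * (\<Sum>j<n. \<omega> j * Y $$ (i, j))"
      using l by (simp add: sum_subtractf sum_distrib_left)
    finally show ?thesis .
  qed
  have "(Y * N * transpose_mat Y) $$ (i, k) = (\<Sum>l<n. (Y * N) $$ (i, l) * transpose_mat Y $$ (l, k))"
    using Y i k by (intro mat_mult_index) (auto simp: N_def)
  also have "\<dots> = (\<Sum>l<n. \<omega> l * Y $$ (i, l) * Y $$ (k, l)
      - \<kappa> * (\<Sum>j<n. \<omega> j * Y $$ (i, j)) * (\<omega> l * Y $$ (k, l)))"
    using Y k by (intro sum.cong) (auto simp: YN algebra_simps)
  also have "\<dots> = (\<Sum>l<n. \<omega> l * Y $$ (i, l) * Y $$ (k, l))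
      - \<kappa> * (\<Sum>l<n. \<omega> l * Y $$ (i, l)) * (\<Sum>l<n. \<omega> l * Y $$ (k, l))"
    by (simp add: sum_subtractf sum_distrib_left)
  finally show ?thesis
    unfolding N_def .
qed

lemma e1e1T_sandwich_index:
  fixes A :: "real mat"
  assumes A: "A \<in> carrier_mat n n" and i: "i < n" and k: "k < n"
  shows "(A * e1e1T n * A) $$ (i, k) = A $$ (i, 0) * A $$ (0, k)"
proof -
  have n: "0 < n"
    using i by simp
  have AE: "A * e1e1T n = mat n n (\<lambda>(i, l). if l = 0 then A $$ (i, 0) else 0)"
  proof (rule eq_matI)
    fix i l assume "i < dim_row (mat n n (\<lambda>(i, l). if l = 0 then A $$ (i, 0) else 0))"
      "l < dim_col (mat n n (\<lambda>(i, l). if l = 0 then A $$ (i, 0) else 0))"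
    then have il: "i < n" "l < n" by auto
    have "(A * e1e1T n) $$ (i, l) = (\<Sum>j<n. A $$ (i, j) * e1e1T n $$ (j, l))"
      using A il by (intro mat_mult_index) (auto simp: e1e1T_def)
    also have "\<dots> = (\<Sum>j<n. if j = 0 then (if l = 0 then A $$ (i, 0) else 0) else 0)"
      using il by (intro sum.cong) (auto simp: e1e1T_def)
    finally show "(A * e1e1T n) $$ (i, l) = mat n n (\<lambda>(i, l). if l = 0 then A $$ (i, 0) else 0) $$ (i, l)"
      using n il by simp
  qed (use A in \<open>auto simp: e1e1T_def\<close>)
  have "(A * e1e1T n * A) $$ (i, k) = (\<Sum>l<n. (if l = 0 then A $$ (i, 0) else 0) * A $$ (l, k))"
    unfolding AE using A i k by (subst mat_mult_index[of _ n n]) (auto intro!: sum.cong)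
  also have "\<dots> = (\<Sum>l<n. if l = 0 then A $$ (i, 0) * A $$ (0, k) else 0)"
    by (intro sum.cong) auto
  finally show ?thesis
    using n by simp
qed

lemma M_PG_index:
  fixes J :: "nat set" and x :: "nat \<Rightarrow> real vec" and w :: "nat \<Rightarrow> real" and \<beta> :: "real vec"
  assumes i: "i < p" and k: "k < p"
  defines "Mp \<equiv> M_Po p J x w \<beta>"
  shows "M_PG a b m p J x w \<beta> $$ (i, k)
    = a / b * (Mp $$ (i, k) - Mp $$ (i, 0) * Mp $$ (0, k) / (Mp $$ (0, 0) + b / real m))"
proof -
  have Mp: "Mp \<in> carrier_mat p p"
    unfolding Mp_def M_Po_def by simp
  have "unit_vec p 0 \<bullet> (Mp *\<^sub>v unit_vec p 0) = Mp $$ (0, 0)"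
    using Mp i by simp
  moreover have "(Mp * e1e1T p * Mp) $$ (i, k) = Mp $$ (i, 0) * Mp $$ (0, k)"
    using Mp i k by (rule e1e1T_sandwich_index)
  moreover have "Mp * e1e1T p * Mp \<in> carrier_mat p p"
    using Mp by (auto simp: e1e1T_def intro!: mult_carrier_mat)
  ultimately show ?thesis
    using Mp i k unfolding M_PG_def Let_def Mp_def[symmetric] by simp
qed

lemma M_Po_index:
  assumes i: "i < p" and k: "k < p"
  shows "M_Po p {1..p} x w \<beta> $$ (i, k) = (\<Sum>l<p. w (Suc l) * exp (regf (x (Suc l)) \<bullet> \<beta>)
    * design_matrix p x $$ (i, l) * design_matrix p x $$ (k, l))"
proof -
  have "M_Po p {1..p} x w \<beta> $$ (i, k)
      = (\<Sum>j\<in>{1..p}. w j * exp (regf (x j) \<bullet> \<beta>) * (regf (x j) $ i) * (regf (x j) $ k))"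
    unfolding M_Po_def using i k by simp
  also have "\<dots> = (\<Sum>l<p. w (Suc l) * exp (regf (x (Suc l)) \<bullet> \<beta>) * (regf (x (Suc l)) $ i) * (regf (x (Suc l)) $ k))"
    by (simp only: sum.atLeast1_atMost_eq One_nat_def)
  finally show ?thesis
    using i k by (simp add: design_matrix_def)
qed

lemma M_PG_factorization:
  fixes p m :: nat and a b :: real and x :: "nat \<Rightarrow> real vec" and w :: "nat \<Rightarrow> real" and \<beta> :: "real vec"
  defines "Y \<equiv> design_matrix p x"
    and "\<omega> \<equiv> \<lambda>l. w (Suc l) * exp (regf (x (Suc l)) \<bullet> \<beta>)"
  defines "\<kappa> \<equiv> 1 / ((\<Sum>l<p. \<omega> l) + b / real m)"
  shows "M_PG a b m p {1..p} x w \<beta>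
    = (a / b) \<cdot>\<^sub>m (Y * mat p p (\<lambda>(l, j). (if l = j then \<omega> l else 0) - \<kappa> * \<omega> l * \<omega> j) * transpose_mat Y)"
    (is "_ = (a / b) \<cdot>\<^sub>m ?S")
proof (rule eq_matI)
  have Y: "Y \<in> carrier_mat p p"
    unfolding Y_def design_matrix_def by simp
  fix i k assume "i < dim_row ((a / b) \<cdot>\<^sub>m ?S)" "k < dim_col ((a / b) \<cdot>\<^sub>m ?S)"
  then have i: "i < p" and k: "k < p" and p: "0 < p"
    using Y by auto
  have M: "M_Po p {1..p} x w \<beta> $$ (j, l) = (\<Sum>r<p. \<omega> r * Y $$ (j, r) * Y $$ (l, r))"
    if "j < p" "l < p" for j l
    using M_Po_index[OF that] unfolding Y_def \<omega>_def .
  have first: "Y $$ (0, r) = 1" if "r < p" for r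
    unfolding Y_def using that by (rule design_matrix_first_row)
  have "M_PG a b m p {1..p} x w \<beta> $$ (i, k) = a / b * ((\<Sum>r<p. \<omega> r * Y $$ (i, r) * Y $$ (k, r))
      - (\<Sum>r<p. \<omega> r * Y $$ (i, r)) * (\<Sum>r<p. \<omega> r * Y $$ (k, r)) / ((\<Sum>r<p. \<omega> r) + b / real m))"
    unfolding M_PG_index[OF i k] M[OF i k] M[OF i p] M[OF p k] M[OF p p] by (simp add: first)
  also have "\<dots> = a / b * ?S $$ (i, k)"
    unfolding sandwich_diag_minus_rank1_index[OF Y i k] \<kappa>_def by simp
  also have "\<dots> = ((a / b) \<cdot>\<^sub>m ?S) $$ (i, k)"
    using Y i k by simp
  finally show "M_PG a b m p {1..p} x w \<beta> $$ (i, k) = ((a / b) \<cdot>\<^sub>m ?S) $$ (i, k)" .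
qed (auto simp: M_PG_def M_Po_def Let_def e1e1T_def Y_def design_matrix_def)

lemma det_design_matrix_nonzero:
  assumes indep: "lin_indpt_family p (\<lambda>j. regf (x j)) {1..p}"
  shows "det (design_matrix p x) \<noteq> 0"
proof
  define Y where "Y = design_matrix p x"
  have Y: "Y \<in> carrier_mat p p"
    unfolding Y_def design_matrix_def by simp
  assume "det (design_matrix p x) = 0"
  then obtain v where v: "v \<in> carrier_vec p" "v \<noteq> 0\<^sub>v p" "Y *\<^sub>v v = 0\<^sub>v p"
    using det_0_iff_vec_prod_zero[OF Y] unfolding Y_def by blast
  have dim: "regf (x j) \<in> carrier_vec p" if "j \<in> {1..p}" for j
    using indep that unfolding lin_indpt_family_def by blast
  have cols: "cols Y = map ((\<lambda>j. regf (x j)) \<circ> Suc) [0..<p]"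
  proof (rule nth_equalityI)
    fix k assume "k < length (cols Y)"
    then have k: "k < p"
      using Y by simp
    then have "regf (x (Suc k)) \<in> carrier_vec p"
      by (intro dim) simp
    then show "cols Y ! k = map ((\<lambda>j. regf (x j)) \<circ> Suc) [0..<p] ! k"
      using k by (auto simp: Y_def design_matrix_def intro!: eq_vecI)
  qed (use Y in simp)
  have "set (cols Y) = (\<lambda>j. regf (x j)) ` {1..p}"
    unfolding cols set_map image_comp[symmetric] by (simp add: atLeastLessThanSuc_atLeastAtMost)
  moreover have "distinct (cols Y)"
  proof -
    have "Suc ` {0..<p} = {1..p}"
      by (simp add: image_Suc_atLeastLessThan atLeastLessThanSuc_atLeastAtMost)
    then show ?thesis
      unfolding cols distinct_map using indep
      by (auto simp: lin_indpt_family_def intro: comp_inj_on)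
  qed
  ultimately have "module.lin_dep class_ring (module_vec TYPE(real) p) ((\<lambda>j. regf (x j)) ` {1..p})"
    using vec_space.lin_depI[OF Y v] by simp
  then show False
    using indep unfolding lin_indpt_family_def by blast
qed

lemma det_M_PG:
  fixes p m :: nat and a b :: real and x :: "nat \<Rightarrow> real vec" and w :: "nat \<Rightarrow> real" and \<beta> :: "real vec"
  assumes p: "0 < p"
  defines "S \<equiv> (\<Sum>j\<in>{1..p}. w j * exp (regf (x j) \<bullet> \<beta>))"
  assumes S: "S + b / real m \<noteq> 0"
  shows "det (M_PG a b m p {1..p} x w \<beta>) = (a / b) ^ p * det (design_matrix p x) ^ 2
    * (\<Prod>j\<in>{1..p}. w j * exp (regf (x j) \<bullet> \<beta>)) * (b / real m / (S + b / real m))"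
proof -
  define Y where "Y = design_matrix p x"
  define \<omega> where "\<omega> = (\<lambda>l. w (Suc l) * exp (regf (x (Suc l)) \<bullet> \<beta>))"
  define \<kappa> where "\<kappa> = 1 / ((\<Sum>l<p. \<omega> l) + b / real m)"
  define N where "N = mat p p (\<lambda>(l, j). (if l = j then \<omega> l else 0) - \<kappa> * \<omega> l * \<omega> j)"
  have Y: "Y \<in> carrier_mat p p" and N: "N \<in> carrier_mat p p"
    unfolding Y_def design_matrix_def N_def by simp_all
  have sum_\<omega>: "(\<Sum>l<p. \<omega> l) = S" and prod_\<omega>: "(\<Prod>l<p. \<omega> l) = (\<Prod>j\<in>{1..p}. w j * exp (regf (x j) \<bullet> \<beta>))"
    unfolding S_def \<omega>_def by (simp_all only: sum.atLeast1_atMost_eq prod.atLeast1_atMost_eq One_nat_def)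
  have "det (M_PG a b m p {1..p} x w \<beta>) = (a / b) ^ p * det (Y * N * transpose_mat Y)"
    unfolding M_PG_factorization Y_def \<omega>_def \<kappa>_def N_def by (simp add: design_matrix_def)
  also have "det (Y * N * transpose_mat Y) = det Y ^ 2 * det N"
    using Y N by (simp add: det_mult[of _ p] det_transpose power2_eq_square)
  also have "det N = (\<Prod>l<p. \<omega> l) * (1 - \<kappa> * (\<Sum>l<p. \<omega> l))"
    unfolding N_def by (rule det_diag_minus_rank1[OF p])
  also have "1 - \<kappa> * (\<Sum>l<p. \<omega> l) = b / real m / (S + b / real m)"
    unfolding \<kappa>_def sum_\<omega> using S by (simp add: field_simps)
  finally show ?thesis
    unfolding prod_\<omega> Y_def by (simp add: mult_ac)
qed

lemma det_M_PG_two_levels: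
  fixes p m :: nat and a b c :: real and x :: "nat \<Rightarrow> real vec" and w :: "nat \<Rightarrow> real" and \<beta> :: "real vec"
  assumes p: "1 \<le> p" and m: "1 \<le> m" and b: "0 < b" and w: "is_design_weights {1..p} w"
    and level: "\<forall>j\<in>{1..p - 1}. regf (x j) \<bullet> \<beta> = c"
  defines "d \<equiv> exp c + b / real m" and "D \<equiv> exp (regf (x p) \<bullet> \<beta>) + b / real m"
  shows "det (M_PG a b m p {1..p} x w \<beta>) = (a / b) ^ p * det (design_matrix p x) ^ 2
    * (\<Prod>j\<in>{1..p}. exp (regf (x j) \<bullet> \<beta>)) * (b / real m)
    * ((\<Prod>j\<in>{1..p}. w j) / (d * (1 - w p) + D * w p))"
proof -
  define S where "S = (\<Sum>j\<in>{1..p}. w j * exp (regf (x j) \<bullet> \<beta>))"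
  define \<beta>0 where "\<beta>0 = b / real m"
  have "(\<Sum>j\<in>{1..p - 1}. w j * exp (regf (x j) \<bullet> \<beta>)) = (\<Sum>j\<in>{1..p - 1}. w j) * exp c"
    using level by (simp add: sum_distrib_right)
  also have "\<dots> = (1 - w p) * exp c"
    unfolding design_weights_last(1)[OF p w] ..
  finally have S_eq: "S + b / real m = d * (1 - w p) + D * w p"
    unfolding S_def sum_atLeastAtMost_last[OF p] d_def D_def by (simp add: algebra_simps flip: \<beta>0_def)
  have "0 < S + b / real m"
    using w m b unfolding S_def is_design_weights_def by (intro add_nonneg_pos sum_nonneg) auto
  then have "det (M_PG a b m p {1..p} x w \<beta>) = (a / b) ^ p * det (design_matrix p x) ^ 2
    * ((\<Prod>j\<in>{1..p}. w j) * (\<Prod>j\<in>{1..p}. exp (regf (x j) \<bullet> \<beta>)))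
    * (b / real m / (d * (1 - w p) + D * w p))"
    using p unfolding S_eq[symmetric] prod.distrib[symmetric] S_def by (intro det_M_PG) simp_all
  then show ?thesis
    by (simp add: mult_ac)
qed

lemma det_M_PG_proportional:
  fixes p m :: nat and a b c :: real and x :: "nat \<Rightarrow> real vec" and \<beta> :: "real vec"
  assumes p: "1 \<le> p" and m: "1 \<le> m" and a: "0 < a" and b: "0 < b"
    and indep: "lin_indpt_family p (\<lambda>j. regf (x j)) {1..p}"
    and level: "\<forall>j\<in>{1..p - 1}. regf (x j) \<bullet> \<beta> = c"
  defines "d \<equiv> exp c + b / real m" and "D \<equiv> exp (regf (x p) \<bullet> \<beta>) + b / real m"
  obtains K where "0 < K"
    and "\<And>w. is_design_weights {1..p} w \<Longrightarrow>
      det (M_PG a b m p {1..p} x w \<beta>) = K * ((\<Prod>j\<in>{1..p}. w j) / (d * (1 - w p) + D * w p))"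
proof
  define K where "K = (a / b) ^ p * det (design_matrix p x) ^ 2
    * (\<Prod>j\<in>{1..p}. exp (regf (x j) \<bullet> \<beta>)) * (b / real m)"
  have "0 < det (design_matrix p x) ^ 2"
    using det_design_matrix_nonzero[OF indep] by simp
  then show "0 < K"
    unfolding K_def using a b m by (intro mult_pos_pos divide_pos_pos prod_pos) auto
  show "det (M_PG a b m p {1..p} x w \<beta>) = K * ((\<Prod>j\<in>{1..p}. w j) / (d * (1 - w p) + D * w p))"
    if "is_design_weights {1..p} w" for w
    unfolding K_def d_def D_def by (rule det_M_PG_two_levels[OF p m b that level])
qed

lemma one_plus_mult_ratio:
  fixes s y z :: real
  assumes "0 < s"
  shows "(1 + s * y) / (1 + s * z) = (y + 1 / s) / (z + 1 / s)"
proof -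
  have "1 + s * v = s * (v + 1 / s)" for v
    using assms by (simp add: field_simps)
  then show ?thesis
    using assms by simp
qed

theorem theorem7:
  fixes p m :: nat and a b c :: real and \<beta> :: "real vec" and x :: "nat \<Rightarrow> real vec"
  assumes hp: "p \<ge> 2" and hm: "m \<ge> 1" and ha: "a > 0" and hb: "b > 0"
    and h\<beta>: "\<beta> \<in> carrier_vec p"
    and hx: "\<forall>j\<in>{1..p}. x j \<in> carrier_vec (p - 1)"
    and hind: "lin_indpt_family p (\<lambda>j. regf (x j)) {1..p}"
    and hc: "\<forall>j\<in>{1..p-1}. regf (x j) \<bullet> \<beta> = c"
    and hgt: "regf (x p) \<bullet> \<beta> > c"
  defines "wp \<equiv> 2 / (real p + sqrt ((real p - 2)^2 + 4 * (real p - 1) *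
              ((1 + real m / b * exp (regf (x p) \<bullet> \<beta>)) / (1 + real m / b * exp c))))"
  defines "wstar \<equiv> (\<lambda>j. if j = p then wp else (1 - wp) / (real p - 1))"
  shows "is_design_weights {1..p} wstar
    \<and> (\<forall>w. is_design_weights {1..p} w \<longrightarrow>
          det (M_PG a b m p {1..p} x w \<beta>) \<le> det (M_PG a b m p {1..p} x wstar \<beta>))
    \<and> (\<forall>w. is_design_weights {1..p} w \<and>
          det (M_PG a b m p {1..p} x w \<beta>) = det (M_PG a b m p {1..p} x wstar \<beta>)
          \<longrightarrow> (\<forall>j\<in>{1..p}. w j = wstar j))
    \<and> 0 < wp \<and> wp < 1 / real p
    \<and> (\<forall>j\<in>{1..p-1}. 1 / real p < wstar j \<and> wstar j < 1 / (real p - 1))"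
proof -
  define d where "d = exp c + b / real m"
  define D where "D = exp (regf (x p) \<bullet> \<beta>) + b / real m"
  have dD: "0 < d" "d < D"
    unfolding d_def D_def using hb hm hgt by (simp_all add: add_pos_pos)
  have "(1 + real m / b * exp (regf (x p) \<bullet> \<beta>)) / (1 + real m / b * exp c) = D / d"
    unfolding d_def D_def using one_plus_mult_ratio[of "real m / b"] hb hm by simp
  then have wp_opt: "wp = optimal_weight p (D / d)" and wstar: "wstar = optimal_design p wp"
    unfolding wp_def wstar_def optimal_weight_def optimal_design_def by simp_all
  have wp: "0 < wp" "wp < 1 / real p" "wp < 1"
    unfolding wp_opt using hp dD by (simp_all add: optimal_weight_root optimal_weight_less_one)
  have design: "is_design_weights {1..p} wstar"
    unfolding wstar using hp wp by (intro optimal_design_is_design) simp_all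
  obtain K where K: "0 < K" and det: "\<And>w. is_design_weights {1..p} w \<Longrightarrow>
      det (M_PG a b m p {1..p} x w \<beta>) = K * ((\<Prod>j\<in>{1..p}. w j) / (d * (1 - w p) + D * w p))"
    using det_M_PG_proportional[of p m a b x \<beta> c] hp hm ha hb hind hc unfolding d_def D_def by auto
  note maximizes = optimal_design_maximizes[OF hp dD, folded wp_opt wstar]
  have det_star: "det (M_PG a b m p {1..p} x wstar \<beta>) = K * ((\<Prod>j\<in>{1..p}. wstar j) / (d * (1 - wp) + D * wp))"
    using det[OF design] by (simp add: wstar_def)
  have le: "det (M_PG a b m p {1..p} x w \<beta>) \<le> det (M_PG a b m p {1..p} x wstar \<beta>)"
    if "is_design_weights {1..p} w" for w
    unfolding det[OF that] det_star using maximizes(1)[OF that] K by (intro mult_left_mono) auto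
  have unique: "\<forall>j\<in>{1..p}. w j = wstar j"
    if "is_design_weights {1..p} w" "det (M_PG a b m p {1..p} x w \<beta>) = det (M_PG a b m p {1..p} x wstar \<beta>)" for w
    using that(2) K unfolding det[OF that(1)] det_star
    by (intro maximizes(2)[OF that(1)]) (metis mult_cancel_left order_less_irrefl)
  have bounds: "\<forall>j\<in>{1..p - 1}. 1 / real p < wstar j \<and> wstar j < 1 / (real p - 1)"
    unfolding wstar using optimal_design_bounds[OF hp wp(1,2)] by blast
  show ?thesis
    using design wp(1,2) le unique bounds by blast
qed

end
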